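(* There exist absolute constants $c_1,c_2>0$ such that the following holds. Suppose $\delta\le e^{-1}$, $C_{n,\delta}\ge c_1\log(n/\delta)$, and $k\ge c_2\, b\,(C_{n,\delta}+1)\max\{\Omega_{\max},E_{\max}\}$. Then $$P\left(\exists (i,j)\in E:\ |F_{ij}-p_{ij}|\ge\sqrt{\frac{C_{n,\delta}}{k\,v_{ij}}}\right)\le\delta.$$
   Context: $G=(V,E)$ is an undirected connected graph on $V=\{1,\dots,n\}$, each edge with a fixed orientation $(i,j)$. Weights $w\in\mathbb{R}^n$ are positive with $b\ge\max_{i,j}w_i/w_j$. For each edge $(i,j)\in E$, $k$ independent comparisons are performed, each won by $i$ with probability $p_{ij}=w_i/(w_i+w_j)$ (independent across edges); $F_{ij}$ is the fraction of them won by $i$. $\rho_{ij}=w_i/w_j$ and $v_{ij}=\rho_{ij}+2+\rho_{ij}^{-1}=1/(p_{ij}(1-p_{ij}))$. $\Omega_{ij}=(e_i-e_j)^TL^\dagger(e_i-e_j)$ is the effective resistance ($L$ the Laplacian, $L^\dagger$ its pseudoinverse), $\Omega_{\max}=\max_{i,j}\Omega_{ij}$. $E_{ij}$ is the set of edges on at least one simple path from $i$ to $j$, $E_{\max}=\max_{i,j}|E_{ij}|$. $C_{n,\delta}$ is a parameter. *)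

theory Defs
  imports "HOL-Probability.Probability"
begin

definition adj :: "(nat \<times> nat) set \<Rightarrow> nat \<Rightarrow> nat \<Rightarrow> bool" where
  "adj E i j \<longleftrightarrow> (i, j) \<in> E \<or> (j, i) \<in> E"

definition oriented_connected_graph :: "nat \<Rightarrow> (nat \<times> nat) set \<Rightarrow> bool" where
  "oriented_connected_graph n E \<longleftrightarrow>
     n \<ge> 1 \<and>
     E \<subseteq> {1..n} \<times> {1..n} \<and>
     (\<forall>i. (i, i) \<notin> E) \<and>
     (\<forall>i j. (i, j) \<in> E \<longrightarrow> (j, i) \<notin> E) \<and>
     (\<forall>i\<in>{1..n}. \<forall>j\<in>{1..n}. (i, j) \<in> {(a, b). adj E a b}\<^sup>*)"

definition laplacian :: "nat \<Rightarrow> (nat \<times> nat) set \<Rightarrow> nat \<Rightarrow> nat \<Rightarrow> real" where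
  "laplacian n E i j =
     (if i \<in> {1..n} \<and> j \<in> {1..n} then
        (if i = j then real (card {l \<in> {1..n}. adj E i l})
         else if adj E i j then -1 else 0)
      else 0)"

definition matmul :: "nat \<Rightarrow> (nat \<Rightarrow> nat \<Rightarrow> real) \<Rightarrow> (nat \<Rightarrow> nat \<Rightarrow> real) \<Rightarrow> nat \<Rightarrow> nat \<Rightarrow> real" where
  "matmul n A B i j = (\<Sum>l\<in>{1..n}. A i l * B l j)"

definition is_pinv :: "nat \<Rightarrow> (nat \<Rightarrow> nat \<Rightarrow> real) \<Rightarrow> (nat \<Rightarrow> nat \<Rightarrow> real) \<Rightarrow> bool" where
  "is_pinv n A X \<longleftrightarrow>
     (\<forall>i j. (i \<notin> {1..n} \<or> j \<notin> {1..n}) \<longrightarrow> X i j = 0) \<and>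
     (\<forall>i\<in>{1..n}. \<forall>j\<in>{1..n}.
        matmul n (matmul n A X) A i j = A i j \<and>
        matmul n (matmul n X A) X i j = X i j \<and>
        matmul n A X i j = matmul n A X j i \<and>
        matmul n X A i j = matmul n X A j i)"

definition pinv :: "nat \<Rightarrow> (nat \<Rightarrow> nat \<Rightarrow> real) \<Rightarrow> nat \<Rightarrow> nat \<Rightarrow> real" where
  "pinv n A = (THE X. is_pinv n A X)"

definition unit_vec :: "nat \<Rightarrow> nat \<Rightarrow> real" where
  "unit_vec i l = (if l = i then 1 else 0)"

definition eff_res :: "nat \<Rightarrow> (nat \<times> nat) set \<Rightarrow> nat \<Rightarrow> nat \<Rightarrow> real" where
  "eff_res n E i j =
     (\<Sum>a\<in>{1..n}. \<Sum>c\<in>{1..n}.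
        (unit_vec i a - unit_vec j a) * pinv n (laplacian n E) a c * (unit_vec i c - unit_vec j c))"

definition Omega_max :: "nat \<Rightarrow> (nat \<times> nat) set \<Rightarrow> real" where
  "Omega_max n E = Max {eff_res n E i j | i j. i \<in> {1..n} \<and> j \<in> {1..n}}"

definition simple_path :: "(nat \<times> nat) set \<Rightarrow> nat \<Rightarrow> nat \<Rightarrow> nat list \<Rightarrow> bool" where
  "simple_path E i j ps \<longleftrightarrow>
     ps \<noteq> [] \<and> hd ps = i \<and> last ps = j \<and> distinct ps \<and>
     (\<forall>t. Suc t < length ps \<longrightarrow> adj E (ps ! t) (ps ! Suc t))"

definition edge_on_path :: "nat \<times> nat \<Rightarrow> nat list \<Rightarrow> bool" where
  "edge_on_path e ps \<longleftrightarrow>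
     (\<exists>t. Suc t < length ps \<and> (e = (ps ! t, ps ! Suc t) \<or> e = (ps ! Suc t, ps ! t)))"

definition path_edges :: "(nat \<times> nat) set \<Rightarrow> nat \<Rightarrow> nat \<Rightarrow> (nat \<times> nat) set" where
  "path_edges E i j = {e \<in> E. \<exists>ps. simple_path E i j ps \<and> edge_on_path e ps}"

definition E_max :: "nat \<Rightarrow> (nat \<times> nat) set \<Rightarrow> nat" where
  "E_max n E = Max {card (path_edges E i j) | i j. i \<in> {1..n} \<and> j \<in> {1..n}}"

definition p_win :: "(nat \<Rightarrow> real) \<Rightarrow> nat \<Rightarrow> nat \<Rightarrow> real" where
  "p_win w i j = w i / (w i + w j)"

definition v_coef :: "(nat \<Rightarrow> real) \<Rightarrow> nat \<Rightarrow> nat \<Rightarrow> real" where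
  "v_coef w i j = w i / w j + 2 + w j / w i"

(* joint law of all outcomes: outcome ((i,j),t) = True iff i wins the t-th comparison on edge (i,j) *)
definition comparisons :: "(nat \<times> nat) set \<Rightarrow> (nat \<Rightarrow> real) \<Rightarrow> nat \<Rightarrow> ((nat \<times> nat) \<times> nat \<Rightarrow> bool) pmf" where
  "comparisons E w k =
     Pi_pmf (E \<times> {..<k}) False (\<lambda>((i, j), t). bernoulli_pmf (p_win w i j))"

definition frac_won :: "nat \<Rightarrow> ((nat \<times> nat) \<times> nat \<Rightarrow> bool) \<Rightarrow> nat \<times> nat \<Rightarrow> real" where
  "frac_won k \<omega> e = (\<Sum>t<k. if \<omega> (e, t) then 1 else 0) / real k"

end

theory Submission
  imports Defs
begin

(* The comparisons on one edge are k independent coins with bias p = p_ij, whose variance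
   p (1 - p) is 1 / v_ij.  A Chernoff bound with the variance-sensitive estimate
   E exp (l (X - p)) \<le> exp (l^2 p (1 - p)), valid for |l| \<le> 1, gives
   P(|F_ij - p_ij| \<ge> sqrt (C / (k v_ij))) \<le> 2 exp (-C/4), provided the optimal
   l = sqrt (C v_ij / k) / 2 is at most 1; this is guaranteed by k \<ge> b (C + 1) since v_ij \<le> 4 b.
   A union bound over the at most n^2 edges and C \<ge> 12 ln (n / \<delta>) finish the proof, with
   c1 = 12 and c2 = 1.  The factor max (Omega_max, E_max) is only used through being at
   least 1 when there is an edge. *)

lemma exp_le_one_plus_plus_square:
  fixes y :: real
  assumes "\<bar>y\<bar> \<le> 1"
  shows "exp y \<le> 1 + y + y\<^sup>2"
proof (cases "y \<ge> 0")
  case True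
  then show ?thesis using exp_bound[of y] assms by simp
next
  case False
  define z where "z = - y"
  have z: "0 \<le> z" "z \<le> 1" using False assms by (auto simp: z_def)
  have "1 - z + z\<^sup>2 = (z - 1/2)\<^sup>2 + 3/4" by (simp add: power2_eq_square algebra_simps)
  then have pos: "0 < 1 - z + z\<^sup>2" by (simp add: add_nonneg_pos)
  have "1 \<le> (1 + z) * (1 - z + z\<^sup>2)"
    using z by (simp add: algebra_simps power2_eq_square)
  also have "\<dots> \<le> exp z * (1 - z + z\<^sup>2)"
    using pos by (intro mult_right_mono exp_ge_add_one_self) auto
  finally have "1 \<le> exp z * (1 + y + y\<^sup>2)" by (simp add: z_def)
  then show ?thesis by (simp add: z_def exp_minus field_simps)
qed

lemma bernoulli_centered_mgf_le:
  fixes q l :: real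
  assumes "0 \<le> q" "q \<le> 1" "\<bar>l\<bar> \<le> 1"
  shows "measure_pmf.expectation (bernoulli_pmf q) (\<lambda>v. exp (l * ((if v then 1 else 0) - q)))
           \<le> exp (l\<^sup>2 * (q * (1 - q)))"
proof -
  have small: "\<bar>l * (1 - q)\<bar> \<le> 1" "\<bar>l * (0 - q)\<bar> \<le> 1"
    using assms by (auto simp: abs_mult intro!: mult_le_one)
  have "measure_pmf.expectation (bernoulli_pmf q) (\<lambda>v. exp (l * ((if v then 1 else 0) - q)))
          = exp (l * (1 - q)) * q + exp (l * (0 - q)) * (1 - q)"
    using assms by simp
  also have "\<dots> \<le> (1 + l * (1 - q) + (l * (1 - q))\<^sup>2) * q + (1 + l * (0 - q) + (l * (0 - q))\<^sup>2) * (1 - q)"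
    using assms by (intro add_mono mult_right_mono exp_le_one_plus_plus_square small) auto
  also have "\<dots> = 1 + l\<^sup>2 * (q * (1 - q))" by (simp add: algebra_simps power2_eq_square)
  also have "\<dots> \<le> exp (l\<^sup>2 * (q * (1 - q)))" by (rule exp_ge_add_one_self)
  finally show ?thesis .
qed

lemma exp_centered_sum_eq_prod:
  "exp (l * (\<Sum>x\<in>A. (if \<omega> x then 1 else 0) - q x))
     = (\<Prod>x\<in>A. exp (l * ((if \<omega> x then 1 else 0) - q x)))"
  by (cases "finite A") (simp_all add: sum_distrib_left exp_sum)

lemma
  fixes q :: "'a \<Rightarrow> real"
  assumes A: "finite A" and q: "\<And>x. x \<in> A \<Longrightarrow> 0 \<le> q x \<and> q x \<le> 1" and l: "\<bar>l\<bar> \<le> 1"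
  shows integrable_exp_bernoulli_sum:
      "integrable (Pi_pmf A False (\<lambda>x. bernoulli_pmf (q x)))
         (\<lambda>\<omega>. exp (l * (\<Sum>x\<in>A. (if \<omega> x then 1 else 0) - q x)))"
    and expectation_exp_bernoulli_sum_le:
      "measure_pmf.expectation (Pi_pmf A False (\<lambda>x. bernoulli_pmf (q x)))
         (\<lambda>\<omega>. exp (l * (\<Sum>x\<in>A. (if \<omega> x then 1 else 0) - q x)))
       \<le> exp (l\<^sup>2 * (\<Sum>x\<in>A. q x * (1 - q x)))"
proof -
  define f where "f = (\<lambda>x v. exp (l * ((if v then 1 else 0) - q x)))"
  have f_integrable: "integrable (bernoulli_pmf (q x)) (f x)" for x
    by (rule integrable_measure_pmf_finite) simp
  show "integrable (Pi_pmf A False (\<lambda>x. bernoulli_pmf (q x)))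
          (\<lambda>\<omega>. exp (l * (\<Sum>x\<in>A. (if \<omega> x then 1 else 0) - q x)))"
    unfolding exp_centered_sum_eq_prod using integrable_prod_Pi_pmf[OF A f_integrable]
    by (simp add: f_def)
  have "measure_pmf.expectation (Pi_pmf A False (\<lambda>x. bernoulli_pmf (q x)))
          (\<lambda>\<omega>. exp (l * (\<Sum>x\<in>A. (if \<omega> x then 1 else 0) - q x)))
        = (\<Prod>x\<in>A. measure_pmf.expectation (bernoulli_pmf (q x)) (f x))"
    unfolding exp_centered_sum_eq_prod f_def
    by (rule expectation_prod_Pi_pmf[OF A f_integrable[unfolded f_def]]) auto
  also have "\<dots> \<le> (\<Prod>x\<in>A. exp (l\<^sup>2 * (q x * (1 - q x))))"
  proof (intro prod_mono conjI)
    fix x assume "x \<in> A"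
    then show "measure_pmf.expectation (bernoulli_pmf (q x)) (f x) \<le> exp (l\<^sup>2 * (q x * (1 - q x)))"
      using bernoulli_centered_mgf_le[of "q x" l] q l by (simp add: f_def)
  qed (simp add: f_def)
  also have "\<dots> = exp (l\<^sup>2 * (\<Sum>x\<in>A. q x * (1 - q x)))"
    using A by (simp add: exp_sum sum_distrib_left)
  finally show "measure_pmf.expectation (Pi_pmf A False (\<lambda>x. bernoulli_pmf (q x)))
          (\<lambda>\<omega>. exp (l * (\<Sum>x\<in>A. (if \<omega> x then 1 else 0) - q x)))
        \<le> exp (l\<^sup>2 * (\<Sum>x\<in>A. q x * (1 - q x)))" .
qed

lemma prob_bernoulli_sum_ge:
  fixes q :: "'a \<Rightarrow> real"
  assumes A: "finite A" and q: "\<And>x. x \<in> A \<Longrightarrow> 0 \<le> q x \<and> q x \<le> 1" and l: "\<bar>l\<bar> \<le> 1"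
  shows "measure_pmf.prob (Pi_pmf A False (\<lambda>x. bernoulli_pmf (q x)))
           {\<omega>. a \<le> l * (\<Sum>x\<in>A. (if \<omega> x then 1 else 0) - q x)}
         \<le> exp (- a + l\<^sup>2 * (\<Sum>x\<in>A. q x * (1 - q x)))"
proof -
  let ?M = "Pi_pmf A False (\<lambda>x. bernoulli_pmf (q x))"
  let ?S = "\<lambda>\<omega>. l * (\<Sum>x\<in>A. (if \<omega> x then 1 else 0) - q x)"
  have "measure_pmf.prob ?M {\<omega>. a \<le> ?S \<omega>}
          = measure_pmf.prob ?M {\<omega> \<in> space ?M. exp a \<le> exp (?S \<omega>)}"
    by simp
  also have "\<dots> \<le> measure_pmf.expectation ?M (\<lambda>\<omega>. exp (?S \<omega>)) / exp a"
    using integrable_exp_bernoulli_sum[OF A q l]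
    by (intro integral_Markov_inequality_measure[where A = UNIV]) auto
  also have "\<dots> \<le> exp (l\<^sup>2 * (\<Sum>x\<in>A. q x * (1 - q x))) / exp a"
    by (intro divide_right_mono expectation_exp_bernoulli_sum_le[OF A q l]) simp_all
  also have "\<dots> = exp (- a + l\<^sup>2 * (\<Sum>x\<in>A. q x * (1 - q x)))"
    by (subst exp_add) (simp add: exp_minus divide_inverse mult.commute)
  finally show ?thesis .
qed

lemma prob_bernoulli_sum_abs_ge:
  fixes q :: "'a \<Rightarrow> real"
  assumes A: "finite A" and q: "\<And>x. x \<in> A \<Longrightarrow> 0 \<le> q x \<and> q x \<le> 1" and l: "0 \<le> l" "l \<le> 1"
  shows "measure_pmf.prob (Pi_pmf A False (\<lambda>x. bernoulli_pmf (q x)))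
           {\<omega>. c \<le> \<bar>\<Sum>x\<in>A. (if \<omega> x then 1 else 0) - q x\<bar>}
         \<le> 2 * exp (- (l * c) + l\<^sup>2 * (\<Sum>x\<in>A. q x * (1 - q x)))"
proof -
  let ?M = "Pi_pmf A False (\<lambda>x. bernoulli_pmf (q x))"
  let ?S = "\<lambda>\<omega>. \<Sum>x\<in>A. (if \<omega> x then 1 else 0) - q x"
  let ?V = "\<Sum>x\<in>A. q x * (1 - q x)"
  have "l * c \<le> l * ?S \<omega> \<or> l * c \<le> (- l) * ?S \<omega>" if "c \<le> \<bar>?S \<omega>\<bar>" for \<omega>
    using mult_left_mono[OF that l(1)] by (cases "0 \<le> ?S \<omega>") auto
  then have "{\<omega>. c \<le> \<bar>?S \<omega>\<bar>} \<subseteq> {\<omega>. l * c \<le> l * ?S \<omega>} \<union> {\<omega>. l * c \<le> (- l) * ?S \<omega>}"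
    by blast
  then have "measure_pmf.prob ?M {\<omega>. c \<le> \<bar>?S \<omega>\<bar>}
      \<le> measure_pmf.prob ?M ({\<omega>. l * c \<le> l * ?S \<omega>} \<union> {\<omega>. l * c \<le> (- l) * ?S \<omega>})"
    by (intro measure_pmf.finite_measure_mono) auto
  also have "\<dots> \<le> measure_pmf.prob ?M {\<omega>. l * c \<le> l * ?S \<omega>}
                  + measure_pmf.prob ?M {\<omega>. l * c \<le> (- l) * ?S \<omega>}"
    by (rule measure_Un_le) auto
  also have "\<dots> \<le> exp (- (l * c) + l\<^sup>2 * ?V) + exp (- (l * c) + (- l)\<^sup>2 * ?V)"
    using l by (intro add_mono prob_bernoulli_sum_ge[OF A q]) auto
  finally show ?thesis by simp
qed

lemma prob_coin_average_deviation:
  fixes p C :: real and k :: nat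
  defines "s \<equiv> p * (1 - p)"
  assumes p: "0 < p" "p < 1" and k: "0 < k" and C: "0 \<le> C" "C \<le> 4 * real k * s"
  shows "measure_pmf.prob (Pi_pmf {..<k} False (\<lambda>_. bernoulli_pmf p))
           {c. sqrt (C * s / real k) \<le> \<bar>(\<Sum>t<k. if c t then 1 else 0) / real k - p\<bar>}
         \<le> 2 * exp (- C / 4)"
proof -
  define \<tau> where "\<tau> = sqrt (C * s / real k)"
  have s: "0 < s" using p by (simp add: s_def)
  have "0 \<le> C * s / real k" using C s by simp
  then have \<tau>: "0 \<le> \<tau>" "\<tau>\<^sup>2 = C * s / real k"
    unfolding \<tau>_def by simp_all
  have "\<tau>\<^sup>2 \<le> 4 * real k * s * s / real k"
    unfolding \<tau>(2) using C s by (intro divide_right_mono mult_right_mono) auto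
  also have "\<dots> = (2 * s)\<^sup>2" using k by (simp add: power2_eq_square)
  finally have "\<tau> \<le> 2 * s" by (rule power2_le_imp_le) (use s in simp)
  define l where "l = \<tau> / (2 * s)" \<comment> \<open>minimises the Chernoff exponent; it is at most 1 by the bound on C\<close>
  have l: "0 \<le> l" "l \<le> 1" using \<tau> s \<open>\<tau> \<le> 2 * s\<close> by (simp_all add: l_def divide_le_eq_1)
  have "(\<Sum>t<k. if c t then 1 else 0) / real k - p = (\<Sum>t<k. (if c t then 1 else 0) - p) / real k"
    for c :: "nat \<Rightarrow> bool"
    using k by (simp add: sum_subtractf diff_divide_distrib)
  then have avg: "\<tau> \<le> \<bar>(\<Sum>t<k. if c t then 1 else 0) / real k - p\<bar>
                    \<longleftrightarrow> real k * \<tau> \<le> \<bar>\<Sum>t<k. (if c t then 1 else 0) - p\<bar>" for c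
    using k by (simp add: pos_le_divide_eq mult.commute)
  have "measure_pmf.prob (Pi_pmf {..<k} False (\<lambda>_. bernoulli_pmf p))
          {c. \<tau> \<le> \<bar>(\<Sum>t<k. if c t then 1 else 0) / real k - p\<bar>}
        = measure_pmf.prob (Pi_pmf {..<k} False (\<lambda>_. bernoulli_pmf p))
          {c. real k * \<tau> \<le> \<bar>\<Sum>t<k. (if c t then 1 else 0) - p\<bar>}"
    by (simp only: avg)
  also have "\<dots> \<le> 2 * exp (- (l * (real k * \<tau>)) + l\<^sup>2 * (\<Sum>t<k. p * (1 - p)))"
    using p by (intro prob_bernoulli_sum_abs_ge l) auto
  also have "(\<Sum>t<k. p * (1 - p)) = real k * s" by (simp add: s_def)
  also have "- (l * (real k * \<tau>)) + l\<^sup>2 * (real k * s) = - real k * \<tau>\<^sup>2 / (4 * s)"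
    using s by (simp add: l_def power2_eq_square field_simps)
  also have "\<dots> = - C / 4"
    using s k by (simp add: \<tau>(2))
  finally show ?thesis by (simp add: \<tau>_def)
qed

lemma comparisons_edge_marginal:
  assumes "finite E" "e \<in> E"
  shows "map_pmf (\<lambda>\<omega> t. \<omega> (e, t)) (comparisons E w k)
           = Pi_pmf {..<k} False (\<lambda>_. bernoulli_pmf (p_win w (fst e) (snd e)))"
proof -
  let ?A = "E \<times> {..<k}" and ?B = "{e} \<times> {..<k}" and ?h = "\<lambda>t. (e, t)"
  let ?coin = "bernoulli_pmf (p_win w (fst e) (snd e))"
  have "Pi_pmf {..<k} False (\<lambda>_. ?coin) = map_pmf (\<lambda>g. g \<circ> ?h) (Pi_pmf ?B False (\<lambda>_. ?coin))"
    by (rule Pi_pmf_bij_betw) (auto simp: bij_betw_def inj_on_def)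
  also have "Pi_pmf ?B False (\<lambda>_. ?coin) = Pi_pmf ?B False (\<lambda>((i, j), t). bernoulli_pmf (p_win w i j))"
    by (intro Pi_pmf_cong) auto
  also have "\<dots> = map_pmf (\<lambda>\<omega> x. if x \<in> ?B then \<omega> x else False) (comparisons E w k)"
    unfolding comparisons_def using assms by (intro Pi_pmf_subset) auto
  also have "map_pmf (\<lambda>g. g \<circ> ?h) \<dots> = map_pmf (\<lambda>\<omega> t. \<omega> (e, t)) (comparisons E w k)"
  proof (unfold pmf.map_comp, intro map_pmf_cong refl ext)
    fix \<omega> t assume "\<omega> \<in> set_pmf (comparisons E w k)"
    then have "\<omega> x = False" if "x \<notin> ?A" for x
      using set_Pi_pmf_subset[of ?A False "\<lambda>((i, j), t). bernoulli_pmf (p_win w i j)"] assms(1) that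
      unfolding comparisons_def by blast
    then show "((\<lambda>g. g \<circ> ?h) \<circ> (\<lambda>\<omega> x. if x \<in> ?B then \<omega> x else False)) \<omega> t = \<omega> (e, t)"
      using assms(2) by auto
  qed
  finally show ?thesis ..
qed

lemma v_coef_eq_inverse_variance:
  assumes "0 < w i" "0 < w j"
  shows "v_coef w i j = 1 / (p_win w i j * (1 - p_win w i j))"
  using assms by (simp add: v_coef_def p_win_def field_simps power2_eq_square)

lemma prob_frac_won_deviation:
  assumes E: "finite E" "(i, j) \<in> E" and w: "0 < w i" "0 < w j"
    and k: "0 < k" and C: "0 \<le> C" "C * v_coef w i j \<le> 4 * real k"
  shows "measure_pmf.prob (comparisons E w k)
           {\<omega>. sqrt (C / (real k * v_coef w i j)) \<le> \<bar>frac_won k \<omega> (i, j) - p_win w i j\<bar>}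
         \<le> 2 * exp (- C / 4)"
proof -
  define p where "p = p_win w i j"
  have p: "0 < p" "p < 1" using w by (simp_all add: p_def p_win_def)
  have v: "v_coef w i j = 1 / (p * (1 - p))"
    unfolding p_def by (rule v_coef_eq_inverse_variance[OF w])
  have "measure_pmf.prob (comparisons E w k)
          {\<omega>. sqrt (C / (real k * v_coef w i j)) \<le> \<bar>frac_won k \<omega> (i, j) - p\<bar>}
        = measure_pmf.prob (map_pmf (\<lambda>\<omega> t. \<omega> ((i, j), t)) (comparisons E w k))
          {c. sqrt (C * (p * (1 - p)) / real k) \<le> \<bar>(\<Sum>t<k. if c t then 1 else 0) / real k - p\<bar>}"
    by (simp add: v frac_won_def)
  also have "\<dots> \<le> 2 * exp (- C / 4)"
    unfolding comparisons_edge_marginal[OF E] fst_conv snd_conv p_def[symmetric]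
    using C p k by (intro prob_coin_average_deviation) (simp_all add: v field_simps)
  finally show ?thesis by (simp add: p_def)
qed

lemma prob_some_frac_won_deviation_le:
  assumes E: "finite E" and w: "\<And>i j. (i, j) \<in> E \<Longrightarrow> 0 < w i \<and> 0 < w j"
    and k: "0 < k" and C: "0 \<le> C" "\<And>i j. (i, j) \<in> E \<Longrightarrow> C * v_coef w i j \<le> 4 * real k"
  shows "measure_pmf.prob (comparisons E w k)
           {\<omega>. \<exists>(i, j)\<in>E. \<bar>frac_won k \<omega> (i, j) - p_win w i j\<bar> \<ge> sqrt (C / (real k * v_coef w i j))}
         \<le> real (card E) * (2 * exp (- C / 4))"
proof -
  let ?dev = "\<lambda>(i, j). {\<omega>. sqrt (C / (real k * v_coef w i j)) \<le> \<bar>frac_won k \<omega> (i, j) - p_win w i j\<bar>}"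
  have "{\<omega>. \<exists>(i, j)\<in>E. \<bar>frac_won k \<omega> (i, j) - p_win w i j\<bar> \<ge> sqrt (C / (real k * v_coef w i j))}
          = (\<Union>e\<in>E. ?dev e)"
    by auto
  moreover have "measure_pmf.prob (comparisons E w k) (\<Union>e\<in>E. ?dev e)
                   \<le> (\<Sum>e\<in>E. measure_pmf.prob (comparisons E w k) (?dev e))"
    by (rule measure_UNION_le[OF E]) auto
  moreover have "measure_pmf.prob (comparisons E w k) (?dev e) \<le> 2 * exp (- C / 4)" if "e \<in> E" for e
  proof (cases e)
    case (Pair i j)
    then show ?thesis using prob_frac_won_deviation[OF E, of i j w k C] that w C k by simp
  qed
  ultimately show ?thesis
    using sum_mono[of E "\<lambda>e. measure_pmf.prob (comparisons E w k) (?dev e)" "\<lambda>_. 2 * exp (- C / 4)"]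
    by simp
qed

lemma v_coef_le:
  assumes "w i / w j \<le> b" "w j / w i \<le> b" "1 \<le> b"
  shows "v_coef w i j \<le> 4 * b"
  using assms by (simp add: v_coef_def)

lemma mult_two_exp_neg_quarter_le:
  fixes n m :: nat and \<delta> C :: real
  assumes n: "1 \<le> n" and \<delta>: "0 < \<delta>" "\<delta> \<le> 1/2" and m: "m \<le> n * n"
    and C: "12 * ln (real n / \<delta>) \<le> C"
  shows "real m * (2 * exp (- C / 4)) \<le> \<delta>"
proof -
  have "exp (3 * ln (real n / \<delta>)) = (real n / \<delta>) ^ 3"
    using exp_of_nat_mult[of 3 "ln (real n / \<delta>)"] n \<delta> by simp
  moreover have "exp (- C / 4) \<le> exp (- (3 * ln (real n / \<delta>)))" using C by simp
  ultimately have "exp (- C / 4) \<le> \<delta> ^ 3 / real n ^ 3"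
    by (simp add: exp_minus power_divide)
  note tail = this
  have "real m * (2 * exp (- C / 4)) \<le> real n ^ 2 * (2 * (\<delta> ^ 3 / real n ^ 3))"
    using m tail by (intro mult_mono) (auto simp: power2_eq_square simp flip: of_nat_mult)
  also have "\<dots> = (2 * \<delta>\<^sup>2 / real n) * \<delta>" using n by (simp add: field_simps power2_eq_square power3_eq_cube)
  also have "\<dots> \<le> 1 * \<delta>"
  proof (intro mult_right_mono)
    have "2 * \<delta>\<^sup>2 \<le> 1" using \<delta> power_mono[of \<delta> "1/2" 2] by (simp add: power2_eq_square)
    then show "2 * \<delta>\<^sup>2 / real n \<le> 1" using n by (simp add: divide_le_eq order_trans)
  qed (use \<delta> in simp)
  finally show ?thesis by simp
qed

lemma E_max_ge_1:
  assumes G: "oriented_connected_graph n E" and e: "(i, j) \<in> E"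
  shows "1 \<le> E_max n E"
proof -
  have E: "E \<subseteq> {1..n} \<times> {1..n}" "i \<noteq> j" using G e by (auto simp: oriented_connected_graph_def)
  then have "simple_path E i j [i, j]" using e by (auto simp: simple_path_def adj_def less_Suc_eq)
  moreover have "edge_on_path (i, j) [i, j]" unfolding edge_on_path_def by force
  ultimately have "(i, j) \<in> path_edges E i j" using e by (auto simp: path_edges_def)
  moreover have "finite (path_edges E i j)"
    using E finite_subset[of _ "{1..n} \<times> {1..n}"] by (auto simp: path_edges_def)
  ultimately have nonempty: "1 \<le> card (path_edges E i j)" by (simp add: Suc_le_eq card_gt_0_iff) blast
  have "card (path_edges E i j) \<in> {card (path_edges E i j) | i j. i \<in> {1..n} \<and> j \<in> {1..n}}"
    using e E by blast
  then have "card (path_edges E i j) \<le> E_max n E"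
    unfolding E_max_def by (intro Max_ge finite_image_set2) simp_all
  with nonempty show ?thesis by linarith
qed

lemma prob_some_frac_won_deviation_le_delta:
  assumes G: "oriented_connected_graph n E" and w: "\<forall>i\<in>{1..n}. 0 < w i"
    and b: "\<forall>i\<in>{1..n}. \<forall>j\<in>{1..n}. w i / w j \<le> b" "1 \<le> b"
    and \<delta>: "0 < \<delta>" "\<delta> \<le> 1/2" and C: "12 * ln (real n / \<delta>) \<le> C"
    and k: "b * (C + 1) \<le> real k"
  shows "measure_pmf.prob (comparisons E w k)
           {\<omega>. \<exists>(i, j)\<in>E. \<bar>frac_won k \<omega> (i, j) - p_win w i j\<bar> \<ge> sqrt (C / (real k * v_coef w i j))}
         \<le> \<delta>"
proof -
  have n: "1 \<le> n" and E: "E \<subseteq> {1..n} \<times> {1..n}" using G by (auto simp: oriented_connected_graph_def)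
  have "1 \<le> real n / \<delta>" using n \<delta> by (simp add: field_simps)
  with C have C0: "0 \<le> C" by (smt (verit) ln_ge_zero)
  have v: "C * v_coef w i j \<le> 4 * real k" if "(i, j) \<in> E" for i j
  proof -
    have "C * v_coef w i j \<le> C * (4 * b)"
      using that E b C0 by (intro mult_left_mono v_coef_le) auto
    also have "\<dots> \<le> 4 * real k" using k b by (simp add: algebra_simps)
    finally show ?thesis .
  qed
  have fin: "finite E" using E by (rule finite_subset) simp
  have wE: "0 < w i \<and> 0 < w j" if "(i, j) \<in> E" for i j using that E w by auto
  have "0 < b * (C + 1)" using b C0 by simp
  with k have k0: "0 < k" by simp
  have "card E \<le> n * n" using card_mono[OF _ E] by (simp add: card_cartesian_product)
  then show ?thesis
    using order_trans[OF prob_some_frac_won_deviation_le[OF fin wE k0 C0 v]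
        mult_two_exp_neg_quarter_le[OF n \<delta> _ C]] by blast
qed

theorem lemma1:
  shows "\<exists>c1 > 0. \<exists>c2 > 0. \<forall>(n::nat) (E::(nat \<times> nat) set) (w::nat \<Rightarrow> real) (b::real)
           (\<delta>::real) (C::real) (k::nat).
     oriented_connected_graph n E \<longrightarrow>
     (\<forall>i\<in>{1..n}. w i > 0) \<longrightarrow>
     (\<forall>i\<in>{1..n}. \<forall>j\<in>{1..n}. w i / w j \<le> b) \<longrightarrow>
     0 < \<delta> \<longrightarrow> \<delta> \<le> exp (-1) \<longrightarrow>
     C \<ge> c1 * ln (real n / \<delta>) \<longrightarrow>
     real k \<ge> c2 * b * (C + 1) * max (Omega_max n E) (real (E_max n E)) \<longrightarrow>
     measure_pmf.prob (comparisons E w k)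
       {\<omega>. \<exists>(i, j)\<in>E. \<bar>frac_won k \<omega> (i, j) - p_win w i j\<bar>
                         \<ge> sqrt (C / (real k * v_coef w i j))} \<le> \<delta>"
proof (rule exI[of _ 12], rule conjI, simp, rule exI[of _ 1], rule conjI, simp, intro allI impI)
  fix n E w b \<delta> C k
  assume G: "oriented_connected_graph n E" and w: "\<forall>i\<in>{1..n}. w i > 0"
    and b: "\<forall>i\<in>{1..n}. \<forall>j\<in>{1..n}. w i / w j \<le> b"
    and \<delta>: "0 < \<delta>" "\<delta> \<le> exp (-1)" and C: "12 * ln (real n / \<delta>) \<le> C"
    and k: "1 * b * (C + 1) * max (Omega_max n E) (real (E_max n E)) \<le> real k"
  have n: "1 \<le> n" using G by (simp add: oriented_connected_graph_def)
  have "exp (-1) \<le> (1/2 :: real)" using exp_ge_add_one_self[of 1] by (simp add: exp_minus field_simps)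
  with \<delta> have \<delta>_half: "\<delta> \<le> 1/2" by simp
  have "1 \<le> real n / \<delta>" using n \<delta> \<delta>_half by (simp add: field_simps)
  with C have C0: "0 \<le> C" by (smt (verit) ln_ge_zero)
  have b1: "1 \<le> b" using b w n by (metis atLeastAtMost_iff div_self less_irrefl order_refl)
  show "measure_pmf.prob (comparisons E w k)
          {\<omega>. \<exists>(i, j)\<in>E. \<bar>frac_won k \<omega> (i, j) - p_win w i j\<bar> \<ge> sqrt (C / (real k * v_coef w i j))} \<le> \<delta>"
  proof (cases "E = {}")
    case False
    then have "1 \<le> max (Omega_max n E) (real (E_max n E))" using E_max_ge_1[OF G] by fastforce
    then have "b * (C + 1) * 1 \<le> b * (C + 1) * max (Omega_max n E) (real (E_max n E))"
      using b1 C0 by (intro mult_left_mono) auto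
    with k have "b * (C + 1) \<le> real k" by simp
    then show ?thesis
      using prob_some_frac_won_deviation_le_delta[OF G w b b1 \<delta>(1) \<delta>_half C] by simp
  qed (use \<delta> in simp)
qed

end
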